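(* The upper bound $\mathcal{S}(T,d)\in O(\sigma n)$ (valid for every string $T$ of length $n>d$ over an alphabet of size $\sigma$) is tight when $\sigma\le d$ and $n-d\in\Omega(n)$: for every constant $\gamma\in(0,1)$ there is a constant $c>0$ such that for all integers $\sigma\ge 2$, $d$, $n$ with $\sigma\le d<n$ and $n-d\ge\gamma n$, there exists a string $T'$ of length $n$ over an alphabet of size $\sigma$ with $\mathcal{S}(T',d)\ge c\,\sigma n$.
   Context: For a string $S$ over alphabet $\Sigma$, a string $w\in\Sigma^*$ is a minimal absent word (MAW) of $S$ if $w$ does not occur in $S$ but every proper substring of $w$ (including the empty string) occurs in $S$; $\mathsf{MAW}(S)$ is the set of all MAWs of $S$. $T[a..b]$ denotes the substring of $T$ from position $a$ to $b$. For a string $T$ of length $n>d$, $\mathcal{S}(T,d)=\sum_{i=1}^{n-d}|\mathsf{MAW}(T[i..i+d-1])\bigtriangleup\mathsf{MAW}(T[i+1..i+d])|$, where $\bigtriangleup$ is symmetric difference. *)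

theory Defs
  imports Complex_Main "HOL-Library.Sublist"
begin

text \<open>Strings are lists; the alphabet is an explicit set Al. Occurrence of a
substring is the contiguous-sublist relation \<open>sublist\<close> from HOL-Library.Sublist.\<close>

definition MAW :: "'a set \<Rightarrow> 'a list \<Rightarrow> 'a list set" where
  "MAW Al S = {w. set w \<subseteq> Al \<and> \<not> sublist w S \<and>
                     (\<forall>u. sublist u w \<and> u \<noteq> w \<longrightarrow> sublist u S)}"

definition symdiff :: "'b set \<Rightarrow> 'b set \<Rightarrow> 'b set" where
  "symdiff A B = (A - B) \<union> (B - A)"

text \<open>Window T[i..i+d-1] (1-indexed) is \<open>take d (drop (i-1) T)\<close>; we index from 0.\<close>
definition window :: "'a list \<Rightarrow> nat \<Rightarrow> nat \<Rightarrow> 'a list" where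
  "window T i d = take d (drop i T)"

definition slideS :: "'a set \<Rightarrow> 'a list \<Rightarrow> nat \<Rightarrow> nat" where
  "slideS Al T d = (\<Sum>i<length T - d.
      card (symdiff (MAW Al (window T i d)) (MAW Al (window T (Suc i) d))))"

end

theory Submission
  imports Defs
begin

text \<open>Let \<open>q = \<sigma> - 1\<close> and \<open>Z = \<lfloor>d / q\<rfloor>\<close>. The witness string is a sequence of blocks
  \<open>0\<^sup>Z c\<close> whose closing letters \<open>c\<close> run cyclically through \<open>1, \<dots>, q\<close>; as the period
  \<open>q (Z + 1)\<close> exceeds \<open>d\<close>, no nonzero letter occurs twice in a window. Let a window start in the
  second half of a block and let \<open>u = 0\<^sup>s c\<close> be its prefix up to the end of that block. Sliding the
  window by one destroys the only occurrence of \<open>u\<close>, while for each of the first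
  \<open>min q \<lfloor>(d + 1) / (Z + 1)\<rfloor>\<close> closing letters \<open>x\<close> from \<open>c\<close> on, the window contains \<open>x 0\<^sup>s\<close> but not
  \<open>x u\<close>. So all these \<open>x u\<close> are minimal absent words of the window but not of the next one,
  which gives \<open>\<Omega>(\<sigma>)\<close> changes at a third of all \<open>n - d\<close> shifts.\<close>

lemma sublist_map_upt_iff:
  assumes "a \<le> b"
  shows "sublist v (map f [a..<b]) \<longleftrightarrow>
    (\<exists>p\<ge>a. p + length v \<le> b \<and> v = map f [p..<p + length v])"
proof
  assume "sublist v (map f [a..<b])"
  then obtain ps ss where split: "map f [a..<b] = ps @ v @ ss"
    unfolding sublist_def by blast
  have len: "b - a = length ps + length v + length ss"
    using arg_cong[OF split, of length] by simp
  show "\<exists>p\<ge>a. p + length v \<le> b \<and> v = map f [p..<p + length v]"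
  proof (intro exI conjI)
    show "a + length ps + length v \<le> b" using len assms by linarith
    then show "v = map f [a + length ps..<a + length ps + length v]"
      using arg_cong[OF split, of "\<lambda>w. take (length v) (drop (length ps) w)"]
      by (simp add: take_map drop_map)
  qed simp
next
  assume "\<exists>p\<ge>a. p + length v \<le> b \<and> v = map f [p..<p + length v]"
  then obtain p where p: "a \<le> p" "p + length v \<le> b" "v = map f [p..<p + length v]"
    by blast
  then have "[a..<b] = [a..<p] @ [p..<p + length v] @ [p + length v..<b]"
    by (metis le_add1 le_trans upt_add_eq_append le_Suc_ex)
  then show "sublist v (map f [a..<b])"
    unfolding sublist_def using p(3) by (metis map_append)
qed

lemma sublist_map_uptI:
  "a \<le> p \<Longrightarrow> p + m \<le> b \<Longrightarrow> sublist (map f [p..<p + m]) (map f [a..<b])"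
  by (subst sublist_map_upt_iff) auto

lemma not_sublist_map_upt_if_last_unique:
  assumes "v \<noteq> []" and "last v = f e" and "Suc e < a + length v"
    and "\<And>e'. e < e' \<Longrightarrow> e' < b \<Longrightarrow> f e' \<noteq> f e"
  shows "\<not> sublist v (map f [a..<b])"
proof
  assume occ: "sublist v (map f [a..<b])"
  show False
  proof (cases "a \<le> b")
    case True
    then obtain p where p: "a \<le> p" "p + length v \<le> b" "v = map f [p..<p + length v]"
      using occ sublist_map_upt_iff by blast
    have "last (map f [p..<p + length v]) = f (p + length v - 1)"
      using assms(1) by (simp add: last_map)
    then have "last v = f (p + length v - 1)"
      using p(3) by simp
    moreover have "e < p + length v - 1" and "p + length v - 1 < b"
      using assms(1,3) p(1,2) by (simp_all add: Suc_le_eq)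
    ultimately show False
      using assms(2,4) by metis
  next
    case False
    then show False using occ assms(1) by simp
  qed
qed

lemma finite_MAW:
  assumes "finite Al"
  shows "finite (MAW Al S)"
proof -
  have "MAW Al S \<subseteq> {w. set w \<subseteq> Al \<and> length w \<le> Suc (length S)}"
  proof
    fix w assume w: "w \<in> MAW Al S"
    have "length w \<le> Suc (length S)"
    proof (cases w)
      case (Cons y ys)
      then have "sublist ys S"
        using w sublist_tl[of w] unfolding MAW_def by simp
      then show ?thesis
        using Cons by (simp add: sublist_length_le)
    qed simp
    then show "w \<in> {w. set w \<subseteq> Al \<and> length w \<le> Suc (length S)}"
      using w unfolding MAW_def by simp
  qed
  then show ?thesis
    using finite_lists_length_le[OF assms] by (rule finite_subset)
qed

lemma proper_sublist_Cons:
  assumes "u \<noteq> []" and "sublist v (x # u)" and "v \<noteq> x # u"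
  shows "sublist v u \<or> sublist v (x # butlast u)"
proof -
  have "prefix v (x # u) \<or> sublist v u"
    using assms(2) by (simp add: sublist_Cons_right)
  moreover have "x # u = (x # butlast u) @ [last u]"
    using assms(1) by simp
  ultimately show ?thesis
    using assms(3) by (metis prefix_snoc prefix_imp_sublist)
qed

lemma Cons_in_MAW:
  assumes "set (x # u) \<subseteq> Al" and "u \<noteq> []" and "sublist u W"
    and "sublist (x # butlast u) W" and "\<not> sublist (x # u) W"
  shows "x # u \<in> MAW Al W"
  unfolding MAW_def
proof (intro CollectI conjI allI impI)
  fix v assume "sublist v (x # u) \<and> v \<noteq> x # u"
  then have "sublist v u \<or> sublist v (x # butlast u)"
    using proper_sublist_Cons[OF assms(2)] by blast
  then show "sublist v W"
    using assms(3,4) sublist_order.order_trans by blast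
qed (use assms in auto)

lemma Cons_notin_MAW: "\<not> sublist u W \<Longrightarrow> x # u \<notin> MAW Al W"
  unfolding MAW_def using sublist_tl[of "x # u"] by force

lemma card_le_card_symdiff_MAW:
  assumes "finite Al" and "set u \<subseteq> Al" and "X \<subseteq> Al" and "u \<noteq> []"
    and "sublist u W" and "\<not> sublist u W'"
    and "\<And>x. x \<in> X \<Longrightarrow> sublist (x # butlast u) W \<and> \<not> sublist (x # u) W"
  shows "card X \<le> card (symdiff (MAW Al W) (MAW Al W'))"
proof -
  have "(\<lambda>x. x # u) ` X \<subseteq> symdiff (MAW Al W) (MAW Al W')"
  proof
    fix w assume "w \<in> (\<lambda>x. x # u) ` X"
    then obtain x where "x \<in> X" and w: "w = x # u" by blast
    then have "w \<in> MAW Al W"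
      unfolding w using assms by (intro Cons_in_MAW) auto
    moreover have "w \<notin> MAW Al W'"
      unfolding w using assms(6) by (rule Cons_notin_MAW)
    ultimately show "w \<in> symdiff (MAW Al W) (MAW Al W')"
      unfolding symdiff_def by blast
  qed
  moreover have "finite (symdiff (MAW Al W) (MAW Al W'))"
    unfolding symdiff_def using finite_MAW[OF assms(1)] by blast
  ultimately have "card ((\<lambda>x. x # u) ` X) \<le> card (symdiff (MAW Al W) (MAW Al W'))"
    by (rule card_mono[rotated])
  then show ?thesis
    by (simp add: card_image inj_on_def)
qed

lemma mod_eq_less_imp_add_le:
  fixes m n q :: nat
  assumes "m mod q = n mod q" and "m < n"
  shows "m + q \<le> n"
proof -
  obtain s where "n = m + q * s"
    using mod_eq_nat2E[OF assms(1)] assms(2) by (metis less_imp_le)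
  moreover have "s \<noteq> 0"
    using assms(2) calculation by auto
  ultimately show ?thesis by simp
qed

lemma card_image_Suc_mod:
  assumes "m \<le> q"
  shows "card ((\<lambda>i. Suc ((j + i) mod q)) ` {..<m}) = m"
proof -
  have "inj_on (\<lambda>i. Suc ((j + i) mod q)) {..<m}"
  proof (rule inj_onI)
    fix i i' assume "i \<in> {..<m}" "i' \<in> {..<m}" and "Suc ((j + i) mod q) = Suc ((j + i') mod q)"
    then have "\<not> j + i < j + i'" and "\<not> j + i' < j + i"
      using assms mod_eq_less_imp_add_le[of "j + i" q "j + i'"]
        mod_eq_less_imp_add_le[of "j + i'" q "j + i"] by auto
    then show "i = i'" by simp
  qed
  then show ?thesis by (simp add: card_image)
qed

definition marker :: "nat \<Rightarrow> nat \<Rightarrow> nat \<Rightarrow> nat" where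
  "marker q Z e = (if e mod Suc Z = Z then Suc (e div Suc Z mod q) else 0)"

lemma marker_less: "0 < q \<Longrightarrow> marker q Z e < Suc q"
  unfolding marker_def by simp

lemma marker_block_offset:
  "t \<le> Z \<Longrightarrow> marker q Z (k * Suc Z + t) = (if t = Z then Suc (k mod q) else 0)"
  unfolding marker_def by (simp only: mod_mult_self3 div_mult_self3) simp

lemma map_marker_in_block:
  assumes "t \<le> Z"
  shows "map (marker q Z) [k * Suc Z + t0..<k * Suc Z + t] = replicate (t - t0) 0"
proof (rule replicate_eqI)
  fix y assume "y \<in> set (map (marker q Z) [k * Suc Z + t0..<k * Suc Z + t])"
  then obtain e where "e < t" and "y = marker q Z (k * Suc Z + e)"
    by (auto simp: le_iff_add add.assoc simp del: mult_Suc_right)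
  then show "y = 0"
    using assms by (simp add: marker_block_offset del: mult_Suc_right)
qed simp

lemma map_marker_block_tail:
  assumes "t \<le> Z"
  shows "map (marker q Z) [k * Suc Z + t..<k * Suc Z + Suc Z] =
    replicate (Z - t) 0 @ [Suc (k mod q)]"
  using assms by (simp add: map_marker_in_block marker_block_offset del: mult_Suc_right)

lemma map_marker_block_end_zeros:
  assumes "s \<le> Z"
  shows "map (marker q Z) [k * Suc Z + Z..<k * Suc Z + Z + Suc s] = Suc (k mod q) # replicate s 0"
proof -
  have "[k * Suc Z + Z..<k * Suc Z + Z + Suc s] =
      (k * Suc Z + Z) # [Suc (k * Suc Z + Z)..<k * Suc Z + Z + Suc s]"
    by (rule upt_conv_Cons) simp
  also have "\<dots> = (k * Suc Z + Z) # [Suc k * Suc Z + 0..<Suc k * Suc Z + s]"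
    by (simp add: ac_simps)
  finally show ?thesis
    using assms by (simp only: list.map map_marker_in_block marker_block_offset)
      (simp del: mult_Suc_right mult_Suc)
qed

lemma marker_eq_nonzero_far:
  assumes "0 < q" and "marker q Z e' = marker q Z e" and "marker q Z e \<noteq> 0" and "e < e'"
  shows "e + q * Suc Z \<le> e'"
proof -
  have "e mod Suc Z = Z" "e' mod Suc Z = Z" and same: "e div Suc Z mod q = e' div Suc Z mod q"
    using assms(2,3) unfolding marker_def by (auto split: if_splits)
  then have e: "e = e div Suc Z * Suc Z + Z" and e': "e' = e' div Suc Z * Suc Z + Z"
    by (metis div_mult_mod_eq)+
  then have "e div Suc Z * Suc Z < e' div Suc Z * Suc Z"
    using assms(4) by linarith
  then have "e div Suc Z < e' div Suc Z"
    by (metis mult_less_cancel2)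
  then have "e div Suc Z + q \<le> e' div Suc Z"
    by (rule mod_eq_less_imp_add_le[OF same])
  then have "(e div Suc Z + q) * Suc Z \<le> e' div Suc Z * Suc Z"
    by (rule mult_le_mono1)
  then show ?thesis
    using e e' by (simp add: algebra_simps del: mult_Suc_right)
qed

lemma not_sublist_map_marker_if_last_block_end:
  assumes "0 < q" and "v \<noteq> []" and "last v = marker q Z (k * Suc Z + Z)"
    and "Suc (k * Suc Z + Z) < a + length v" and "b \<le> k * Suc Z + Z + q * Suc Z"
  shows "\<not> sublist v (map (marker q Z) [a..<b])"
proof (rule not_sublist_map_upt_if_last_unique[where e = "k * Suc Z + Z"])
  fix e' assume "k * Suc Z + Z < e'" and "e' < b"
  moreover have "marker q Z (k * Suc Z + Z) \<noteq> 0"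
    by (simp add: marker_block_offset del: mult_Suc_right)
  ultimately show "marker q Z e' \<noteq> marker q Z (k * Suc Z + Z)"
    using marker_eq_nonzero_far[OF assms(1)] assms(5) by fastforce
qed (use assms in auto)

lemma card_symdiff_MAW_marker_shift:
  assumes q: "0 < q" and period: "d < q * Suc Z" and cnt: "cnt * Suc Z \<le> Suc d"
    and good: "Suc Z \<le> 2 * (E mod Suc Z)"
  shows "cnt \<le> card (symdiff (MAW {0..<Suc q} (map (marker q Z) [E..<E + d]))
                               (MAW {0..<Suc q} (map (marker q Z) [Suc E..<Suc E + d])))"
    (is "_ \<le> card (symdiff (MAW _ ?W) (MAW _ ?W'))")
proof (cases "cnt = 0")
  case False
  define j r where "j = E div Suc Z" and "r = E mod Suc Z"
  define s where "s = Z - r"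
  define u where "u = replicate s 0 @ [Suc (j mod q)]"
  define X where "X = (\<lambda>i. Suc ((j + i) mod q)) ` {..<cnt}"
  have E: "E = j * Suc Z + r"
    unfolding j_def r_def by (simp only: div_mult_mod_eq)
  have good_r: "Suc Z \<le> 2 * r" and "r \<le> Z"
    unfolding r_def using good by (auto simp: less_Suc_eq_le)
  have Es: "E + s = j * Suc Z + Z"
    unfolding s_def E using \<open>r \<le> Z\<close> by simp
  have last_u: "last u = marker q Z (j * Suc Z + Z)"
    unfolding u_def by (simp add: marker_block_offset del: mult_Suc_right)
  have "Suc Z \<le> cnt * Suc Z"
    using False by (cases cnt) auto
  then have "Suc s \<le> d"
    using cnt good_r \<open>r \<le> Z\<close> unfolding s_def by linarith
  have "cnt \<le> q"
    using cnt period mult_le_cancel2[of cnt "Suc Z" q] by linarith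
  have "u = map (marker q Z) [E..<E + Suc s]"
    using map_marker_block_tail[OF \<open>r \<le> Z\<close>, of q j] Es unfolding u_def s_def E
    by (simp del: mult_Suc_right)
  then have "sublist u ?W"
    using \<open>Suc s \<le> d\<close> sublist_map_uptI[of E E "Suc s" "E + d"] by simp
  moreover have "\<not> sublist u ?W'"
    using q last_u period Es by (intro not_sublist_map_marker_if_last_block_end) (auto simp: u_def)
  moreover have "sublist (x # butlast u) ?W \<and> \<not> sublist (x # u) ?W" if "x \<in> X" for x
  proof
    obtain i where "i < cnt" and x: "x = Suc ((j + i) mod q)"
      using \<open>x \<in> X\<close> unfolding X_def by blast
    define P where "P = (j + i) * Suc Z + Z"
    have "Suc i * Suc Z \<le> Suc d"
      using \<open>i < cnt\<close> cnt by (meson Suc_leI le_trans mult_le_mono1)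
    moreover have "P + Suc s = j * Suc Z + Suc i * Suc Z + s"
      unfolding P_def by (simp add: algebra_simps)
    ultimately have "P + Suc s \<le> E + d"
      using good_r \<open>r \<le> Z\<close> unfolding E s_def by linarith
    moreover have "E \<le> P"
      unfolding E P_def using \<open>r \<le> Z\<close> by (simp add: add_mult_distrib)
    moreover have "x # butlast u = map (marker q Z) [P..<P + Suc s]"
      using map_marker_block_end_zeros[of s Z q "j + i"] unfolding x u_def s_def P_def by simp
    ultimately show "sublist (x # butlast u) ?W"
      using sublist_map_uptI by metis
    show "\<not> sublist (x # u) ?W"
      using q last_u period Es by (intro not_sublist_map_marker_if_last_block_end) (auto simp: u_def)
  qed
  ultimately have "card X \<le> card (symdiff (MAW {0..<Suc q} ?W) (MAW {0..<Suc q} ?W'))"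
    by (intro card_le_card_symdiff_MAW[where u = u]) (auto simp: u_def X_def q)
  then show ?thesis
    using card_image_Suc_mod[OF \<open>cnt \<le> q\<close>] unfolding X_def by simp
qed simp

lemma sum_mod_less_indicator:
  fixes L g :: nat
  assumes "0 < L" and "g \<le> L"
  shows "(\<Sum>i<N. if i mod L < g then 1 else 0::nat) = g * (N div L) + min g (N mod L)"
proof (induction N)
  case (Suc N)
  show ?case
  proof (cases "Suc (N mod L) = L")
    case True
    then have "Suc N mod L = 0" and "Suc N div L = Suc (N div L)"
      using mod_Suc[of N L] div_Suc[of N L] by auto
    then show ?thesis
      using Suc True assms(2) by (auto simp: min_def)
  next
    case False
    then have "Suc N mod L = Suc (N mod L)" and "Suc N div L = N div L"
      using mod_Suc[of N L] div_Suc[of N L] by auto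
    then show ?thesis
      using Suc False assms by (auto simp: min_def)
  qed
qed simp

lemma mult_le_sum_mod_less_indicator:
  fixes L g :: nat
  assumes "0 < L" and "g \<le> L"
  shows "g * N \<le> L * (\<Sum>i<N. if i mod L < g then 1 else 0::nat)"
proof -
  have rest: "g * (N mod L) \<le> L * min g (N mod L)"
    using assms by (cases "g \<le> N mod L") (simp_all add: min_def mult.commute)
  have "g * N = L * (g * (N div L)) + g * (N mod L)"
    by (metis add_mult_distrib2 mult.left_commute mult_div_mod_eq)
  also have "\<dots> \<le> L * (g * (N div L) + min g (N mod L))"
    using rest by (simp add: add_mult_distrib2)
  finally show ?thesis
    using sum_mod_less_indicator[OF assms] by simp
qed

lemma le_3_mult_sum_mod_less_half:
  fixes L :: nat
  assumes "2 \<le> L"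
  shows "N \<le> 3 * (\<Sum>i<N. if i mod L < L div 2 then 1 else 0::nat)"
proof -
  define F where "F = (\<Sum>i<N. if i mod L < L div 2 then 1 else 0::nat)"
  have "L div 2 * N \<le> L * F"
    unfolding F_def using assms by (intro mult_le_sum_mod_less_indicator) simp_all
  also have "\<dots> \<le> L div 2 * (3 * F)"
  proof -
    have "L \<le> 3 * (L div 2)"
      using assms by presburger
    then show ?thesis
      using mult_le_mono1 by (simp add: mult.left_commute)
  qed
  finally show ?thesis
    unfolding F_def[symmetric] using assms by simp
qed

lemma Suc_le_4_min_div:
  fixes q d :: nat
  assumes "0 < q" and "q < d"
  shows "Suc q \<le> 4 * min q (Suc d div Suc (d div q))"
proof -
  define L m where "L = Suc (d div q)" and "m = Suc d div L"
  have "0 < d div q"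
    using assms by (simp add: div_greater_zero_iff)
  then have "2 \<le> L" and "L \<le> Suc d"
    unfolding L_def using div_le_dividend[of d q] by simp_all
  then have "0 < m"
    unfolding m_def by (simp add: div_greater_zero_iff)
  have qL: "q * L \<le> d + q"
    unfolding L_def using times_div_less_eq_dividend[of q d] by simp
  have dL: "Suc d < (m + 1) * L"
    unfolding m_def using dividend_less_div_times[of L "Suc d"] \<open>2 \<le> L\<close> by simp
  have "q \<le> 2 * m + 1"
  proof (rule ccontr)
    assume "\<not> q \<le> 2 * m + 1"
    define t where "t = q - (m + 1)"
    have q: "q = m + 1 + t" and "m + 1 \<le> t"
      using \<open>\<not> q \<le> 2 * m + 1\<close> unfolding t_def by arith+
    have "q * L = (m + 1) * L + t * L"
      unfolding q by (simp add: algebra_simps)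
    moreover have "2 * t \<le> t * L"
      using \<open>2 \<le> L\<close> by simp
    ultimately show False
      using qL dL \<open>m + 1 \<le> t\<close> q by linarith
  qed
  then show ?thesis
    using \<open>0 < m\<close> assms(1) unfolding m_def L_def by (simp add: min_def)
qed

lemma window_map_upt:
  "i + d \<le> n \<Longrightarrow> window (map f [a..<a + n]) i d = map f [a + i..<a + i + d]"
  unfolding window_def by (simp add: take_map drop_map)

text \<open>The offset makes the good shifts, those whose window starts in the second half of a block,
  the first \<open>\<lfloor>(Z + 1) / 2\<rfloor>\<close> of every \<open>Z + 1\<close> consecutive shifts.\<close>
definition marker_string :: "nat \<Rightarrow> nat \<Rightarrow> nat \<Rightarrow> nat list" where
  "marker_string q Z n = (let a = Suc Z - Suc Z div 2 in map (marker q Z) [a..<a + n])"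

lemma length_marker_string [simp]: "length (marker_string q Z n) = n"
  unfolding marker_string_def by (simp add: Let_def)

lemma set_marker_string: "0 < q \<Longrightarrow> set (marker_string q Z n) \<subseteq> {0..<Suc q}"
  unfolding marker_string_def by (auto simp: Let_def marker_less)

lemma card_symdiff_MAW_marker_string:
  assumes "0 < q" and "d < q * Suc Z" and "cnt * Suc Z \<le> Suc d"
    and "i < n - d" and "i mod Suc Z < Suc Z div 2"
  shows "cnt \<le> card (symdiff (MAW {0..<Suc q} (window (marker_string q Z n) i d))
                               (MAW {0..<Suc q} (window (marker_string q Z n) (Suc i) d)))"
proof -
  define a where "a = Suc Z - Suc Z div 2"
  have "a + i mod Suc Z < Suc Z"
    using assms(5) unfolding a_def by linarith
  then have "(a + i) mod Suc Z = a + i mod Suc Z"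
    by (metis mod_add_right_eq mod_less)
  then have "Suc Z \<le> 2 * ((a + i) mod Suc Z)"
    unfolding a_def by linarith
  then show ?thesis
    using card_symdiff_MAW_marker_shift[OF assms(1-3), of "a + i"] assms(4)
    unfolding marker_string_def a_def[symmetric] Let_def by (simp add: window_map_upt)
qed

lemma slideS_marker_string_ge:
  assumes "0 < q" and "q < d" and "d < n"
  shows "Suc q * (n - d) \<le> 12 * slideS {0..<Suc q} (marker_string q (d div q) n) d"
proof -
  define Z cnt where "Z = d div q" and "cnt = min q (Suc d div Suc Z)"
  define F where "F = (\<Sum>i<n - d. if i mod Suc Z < Suc Z div 2 then 1 else 0::nat)"
  have "d < q * Suc Z"
    unfolding Z_def using dividend_less_times_div[OF assms(1), of d] by simp
  moreover have "cnt * Suc Z \<le> Suc d"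
    unfolding cnt_def by (meson div_times_less_eq_dividend le_trans min.cobounded2 mult_le_mono1)
  ultimately have "(\<Sum>i<n - d. if i mod Suc Z < Suc Z div 2 then cnt else 0)
      \<le> slideS {0..<Suc q} (marker_string q Z n) d"
    unfolding slideS_def length_marker_string
    by (intro sum_mono) (simp add: card_symdiff_MAW_marker_string[OF assms(1)])
  moreover have "cnt * F = (\<Sum>i<n - d. if i mod Suc Z < Suc Z div 2 then cnt else 0)"
    unfolding F_def sum_distrib_left by (intro sum.cong) auto
  moreover have "0 < Z"
    unfolding Z_def using assms(1,2) by (simp add: div_greater_zero_iff)
  then have "n - d \<le> 3 * F"
    unfolding F_def by (intro le_3_mult_sum_mod_less_half) simp
  moreover have "Suc q \<le> 4 * cnt"
    unfolding cnt_def Z_def using Suc_le_4_min_div[OF assms(1,2)] .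
  ultimately have "Suc q * (n - d) \<le> 12 * slideS {0..<Suc q} (marker_string q Z n) d"
    using mult_le_mono[of "Suc q" "4 * cnt" "n - d" "3 * F"] by simp
  then show ?thesis
    unfolding Z_def .
qed

theorem lemma15:
  fixes \<gamma> :: real
  assumes "0 < \<gamma>" and "\<gamma> < 1"
  shows "\<exists>c::real. c > 0 \<and>
    (\<forall>\<sigma> d n :: nat. 2 \<le> \<sigma> \<and> \<sigma> \<le> d \<and> d < n \<and> real (n - d) \<ge> \<gamma> * real n \<longrightarrow>
       (\<exists>T :: nat list. length T = n \<and> set T \<subseteq> {0..<\<sigma>} \<and>
          real (slideS {0..<\<sigma>} T d) \<ge> c * real \<sigma> * real n))"
proof (intro exI[of _ "\<gamma> / 12"] conjI allI impI)
  fix \<sigma> d n :: nat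
  assume "2 \<le> \<sigma> \<and> \<sigma> \<le> d \<and> d < n \<and> real (n - d) \<ge> \<gamma> * real n"
  then obtain q where \<sigma>: "\<sigma> = Suc q" and "0 < q" "q < d" "d < n" and dense: "\<gamma> * real n \<le> real (n - d)"
    by (intro that[of "\<sigma> - 1"]) auto
  define T where "T = marker_string q (d div q) n"
  have "real \<sigma> * (\<gamma> * real n) \<le> real \<sigma> * real (n - d)"
    using dense by (simp add: mult_left_mono)
  also have "\<dots> \<le> 12 * real (slideS {0..<\<sigma>} T d)"
    using slideS_marker_string_ge[OF \<open>0 < q\<close> \<open>q < d\<close> \<open>d < n\<close>] unfolding T_def \<sigma>
    by (metis of_nat_le_iff of_nat_mult of_nat_numeral)
  finally have "\<gamma> / 12 * real \<sigma> * real n \<le> real (slideS {0..<\<sigma>} T d)"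
    by (simp add: field_simps)
  moreover have "length T = n" and "set T \<subseteq> {0..<\<sigma>}"
    unfolding T_def \<sigma> using set_marker_string[OF \<open>0 < q\<close>] by simp_all
  ultimately show "\<exists>T :: nat list. length T = n \<and> set T \<subseteq> {0..<\<sigma>} \<and>
      real (slideS {0..<\<sigma>} T d) \<ge> \<gamma> / 12 * real \<sigma> * real n"
    by blast
qed (use assms in simp)

end
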